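(* Let $q>0$. For $t>1$, $z\in(-1,1)$ put $K(t,z)=\frac{t^2+2tz+1}{(z+t)^2}$ and $\tilde J(-q,q,t,z)=(z+t)^2\big[K(t,z)^{2/q}-1\big]$. Then for every $t>1$ and $z\in(-1,1)$: $\frac{\partial\tilde J}{\partial t}(-q,q,t,z)<0$ if $0<q<2$, and $\frac{\partial\tilde J}{\partial t}(-q,q,t,z)>0$ if $q>2$. Moreover, for every $r>1$: $\frac{\partial\Theta}{\partial r}(-q,q,r)<0$ if $0<q<2$, and $\frac{\partial\Theta}{\partial r}(-q,q,r)>0$ if $q>2$.
   Context: For $p<q$, $p,q\ne0$, $r>1$, $\Theta(p,q,r)=\int_1^r\Big(\big(\frac{r^p-r^q}{r^p-1}+\frac{r^q-1}{r^p-1}x^p\big)^{2/q}-x^2\Big)^{-1/2}dx$. With $\beta_0=\frac{2q-p}{3}$ and $t=\frac{r^{\beta_0}+1}{r^{\beta_0}-1}$, one has $\Theta(p,q,r)=\int_{-1}^1\frac{dz}{\beta_0\sqrt{\tilde J(p,q,t,z)}}$ (for $p=-q$, $\beta_0=q$). *)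

theory Defs
  imports "HOL-Analysis.Analysis"
begin

definition Kfun :: "real \<Rightarrow> real \<Rightarrow> real" where
  "Kfun t z = (t^2 + 2*t*z + 1) / (z + t)^2"

definition Jtilde_sym :: "real \<Rightarrow> real \<Rightarrow> real \<Rightarrow> real" where
  "Jtilde_sym q t z = (z + t)^2 * (Kfun t z powr (2/q) - 1)"

text \<open>Theta(p,q,r) as an integral over [1,r] (improper at the endpoints;
  the integrand is nonnegative, so the Henstock-Kurzweil integral agrees with
  the Lebesgue / improper Riemann integral).\<close>
definition Theta :: "real \<Rightarrow> real \<Rightarrow> real \<Rightarrow> real" where
  "Theta p q r = integral {1..r} (\<lambda>x.
     (((r powr p - r powr q) / (r powr p - 1) + (r powr q - 1) / (r powr p - 1) * x powr p)
        powr (2/q) - x^2) powr (-1/2))"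

end

theory Submission
  imports Defs
begin

(* Write a = 2/q. Differentiating in t gives
   d/dt Jtilde(-q,q,t,z) = 2 (z + t) ((1 - a) K^a + a K^(a-1) - 1),
   and the bracket is the value at 1 of the tangent line to x^a at K, minus 1. As K > 1, it is
   negative when x^a is strictly convex (a > 1, i.e. q < 2) and positive when x^a is strictly
   concave (q > 2).

   For Theta put t = (r^q + 1)/(r^q - 1). The substitution x = ((z + t)/(t - 1))^(1/q) turns
   Theta(-q,q,r) into the integral of Jtilde^(-1/2)/q over [-1, 1], and z = sin theta then
   removes the endpoint singularities: Jtilde(sin theta) = cos^2 theta * g(Y) with
   Y = K(t, sin theta) - 1 = cos^2 theta/(sin theta + t)^2 and g(y) = ((1 + y)^a - 1)/y,
   the secant slope of (1 + y)^a. The resulting integrand 1/(q sqrt (g Y)) is smooth in t, so we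
   may differentiate under the integral sign. Y decreases in t, g increases for a > 1 and
   decreases for a < 1 (y^2 g'(y) is minus the tangent defect at 1 + y), and t decreases in r. *)

text \<open>The library's substitution rules need a continuous integrand; for a nonnegative one,
  possibly unbounded at the ends of the interval, we pass through the Lebesgue integral.\<close>

lemma has_integral_substitution_nonneg:
  fixes f g g' :: "real \<Rightarrow> real"
  assumes "a \<le> b"
    and [measurable]: "f \<in> borel_measurable borel" and f_nonneg: "\<And>x. f x \<ge> 0"
    and g_deriv: "\<And>x. x \<in> {a..b} \<Longrightarrow> (g has_real_derivative g' x) (at x)"
    and g'_cont: "continuous_on {a..b} g'" and g'_nonneg: "\<And>x. x \<in> {a..b} \<Longrightarrow> g' x \<ge> 0"
    and integral: "((\<lambda>x. f (g x) * g' x) has_integral I) {a..b}"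
  shows "(f has_integral I) {g a..g b}"
proof -
  have "I \<ge> 0"
    by (rule has_integral_nonneg[OF integral]) (simp add: f_nonneg g'_nonneg)
  have "(\<integral>\<^sup>+x. ennreal (f x * indicator {g a..g b} x) \<partial>lborel)
      = (\<integral>\<^sup>+x. ennreal (f (g x) * g' x * indicator {a..b} x) \<partial>lborel)"
    by (rule nn_integral_substitution[OF _ g_deriv g'_cont g'_nonneg \<open>a \<le> b\<close>])
       (simp add: set_borel_measurable_def)
  also have "\<dots> = (\<integral>\<^sup>+x. ennreal (indicator {a..b} x * (f (g x) * g' x)) \<partial>lborel)"
    by (simp add: mult.commute)
  also have "\<dots> = ennreal I"
    by (rule nn_integral_has_integral_lebesgue[OF _ integral]) (simp add: f_nonneg g'_nonneg)
  finally have "((\<lambda>x. f x * indicator {g a..g b} x) has_integral I) UNIV"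
    using f_nonneg \<open>I \<ge> 0\<close> by (intro nn_integral_has_integral) auto
  moreover have "(\<lambda>x. f x * indicator {g a..g b} x) = (\<lambda>x. if x \<in> {g a..g b} then f x else 0)"
    by (simp add: fun_eq_iff)
  ultimately show ?thesis
    using has_integral_restrict_UNIV[of "{g a..g b}" f] by simp
qed

lemma powr_minus_half: "x > 0 \<Longrightarrow> x powr (-1/2) = 1 / sqrt x"
  using powr_minus_divide[of x "1/2"] by (simp add: powr_half_sqrt)

lemma powr_ratio_has_derivative:
  assumes "r > 0" "r powr b \<noteq> 1"
  shows "((\<lambda>s. (s powr b + 1) / (s powr b - 1)) has_real_derivative
           -2 * b * r powr (b - 1) / (r powr b - 1)^2) (at r)"
proof -
  have "((\<lambda>s. (s powr b + 1) / (s powr b - 1)) has_real_derivative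
      ((b * r powr (b - 1)) * (r powr b - 1) - (r powr b + 1) * (b * r powr (b - 1))) / (r powr b - 1)^2) (at r)"
    using assms by (auto intro!: derivative_eq_intros simp: power2_eq_square)
  moreover have "(b * r powr (b - 1)) * (r powr b - 1) - (r powr b + 1) * (b * r powr (b - 1))
      = -2 * b * r powr (b - 1)"
    by (simp add: algebra_simps)
  ultimately show ?thesis by simp
qed

section \<open>Tangent and secant defects of power functions\<close>

text \<open>The value at 1 of the tangent line to \<open>x powr a\<close> at \<open>k\<close>, minus 1; recall that
  \<open>x powr a\<close> is strictly convex on \<open>{0<..}\<close> iff \<open>a * (1 - a) < 0\<close>.\<close>

definition tangent_defect :: "real \<Rightarrow> real \<Rightarrow> real" where
  "tangent_defect a k = (1 - a) * k powr a + a * k powr (a - 1) - 1"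

lemma tangent_defect_has_derivative:
  assumes "k > 0"
  shows "(tangent_defect a has_real_derivative a * (1 - a) * k powr (a - 2) * (k - 1)) (at k)"
proof -
  have "k powr (a - 1) = k powr (a - 2) * k"
    using powr_add[of k "a - 2" 1] assms by simp
  then show ?thesis
    unfolding tangent_defect_def using assms
    by (auto intro!: derivative_eq_intros simp: algebra_simps)
qed

lemma tangent_defect_eq_mean_value:
  assumes "k > 1"
  obtains c where "1 < c" "c < k"
    "tangent_defect a k = (k - 1) * (a * (1 - a) * c powr (a - 2) * (c - 1))"
proof -
  have "(tangent_defect a has_real_derivative a * (1 - a) * x powr (a - 2) * (x - 1)) (at x)"
    if "1 \<le> x" for x
    using that by (intro tangent_defect_has_derivative) simp
  from MVT2[OF assms this] obtain c where "1 < c" "c < k"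
    "tangent_defect a k - tangent_defect a 1 = (k - 1) * (a * (1 - a) * c powr (a - 2) * (c - 1))"
    by blast
  moreover have "tangent_defect a 1 = 0" by (simp add: tangent_defect_def)
  ultimately show ?thesis using that by simp
qed

lemma tangent_defect_neg:
  assumes "a * (1 - a) < 0" "k > 1"
  shows "tangent_defect a k < 0"
proof -
  obtain c where "1 < c" "c < k"
    and eq: "tangent_defect a k = (k - 1) * (a * (1 - a) * c powr (a - 2) * (c - 1))"
    using tangent_defect_eq_mean_value assms(2) .
  then have "a * (1 - a) * c powr (a - 2) < 0"
    using assms(1) by (simp add: mult_neg_pos)
  then have "a * (1 - a) * c powr (a - 2) * (c - 1) < 0"
    using \<open>1 < c\<close> by (simp add: mult_neg_pos)
  then show ?thesis unfolding eq using assms(2) by (simp add: mult_pos_neg)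
qed

lemma tangent_defect_pos:
  assumes "a * (1 - a) > 0" "k > 1"
  shows "tangent_defect a k > 0"
proof -
  obtain c where "1 < c" "c < k"
    and eq: "tangent_defect a k = (k - 1) * (a * (1 - a) * c powr (a - 2) * (c - 1))"
    using tangent_defect_eq_mean_value assms(2) .
  then show ?thesis unfolding eq using assms by simp
qed

definition secant_slope :: "real \<Rightarrow> real \<Rightarrow> real" where
  "secant_slope a y = (if y = 0 then a else ((1 + y) powr a - 1) / y)"

text \<open>\<open>slope_defect a y / y\<close> is the derivative of \<open>secant_slope a\<close> at \<open>y \<noteq> 0\<close>
  (\<open>secant_slope_has_derivative\<close>); unlike that quotient, \<open>slope_defect a\<close> is continuous at 0.\<close>

definition slope_defect :: "real \<Rightarrow> real \<Rightarrow> real" where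
  "slope_defect a y = a * (1 + y) powr (a - 1) - secant_slope a y"

lemma isCont_secant_slope:
  assumes "y > -1"
  shows "isCont (secant_slope a) y"
proof (cases "y = 0")
  case True
  have "((\<lambda>y. (1 + y) powr a) has_real_derivative a) (at 0)"
    by (auto intro!: derivative_eq_intros)
  then have "((\<lambda>x. ((1 + x) powr a - 1) / x) \<longlongrightarrow> a) (at 0)"
    by (simp add: has_field_derivative_iff)
  moreover have "\<forall>\<^sub>F x in at 0. ((1 + x) powr a - 1) / x = secant_slope a x"
    by (auto simp: secant_slope_def eventually_at_filter)
  ultimately have "(secant_slope a \<longlongrightarrow> a) (at 0)"
    by (rule Lim_transform_eventually)
  then show ?thesis using True by (simp add: isCont_def secant_slope_def)
next
  case False
  have "isCont (\<lambda>y. ((1 + y) powr a - 1) / y) y"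
    using False assms by (auto intro!: continuous_intros)
  moreover have "\<forall>\<^sub>F x in nhds y. ((1 + x) powr a - 1) / x = secant_slope a x"
    using t1_space_nhds[OF False] by eventually_elim (simp add: secant_slope_def)
  ultimately show ?thesis
    using isCont_cong[of "\<lambda>y. ((1 + y) powr a - 1) / y" "secant_slope a" y] by simp
qed

lemma continuous_on_secant_slope: "continuous_on {-1<..} (secant_slope a)"
  by (intro continuous_at_imp_continuous_on ballI isCont_secant_slope) auto

lemma continuous_on_slope_defect: "continuous_on {-1<..} (slope_defect a)"
  unfolding slope_defect_def
  by (intro continuous_intros continuous_on_secant_slope) auto

lemma secant_slope_pos:
  assumes "a > 0" "y > -1"
  shows "secant_slope a y > 0"
proof (cases y "0::real" rule: linorder_cases)
  case less
  then have "(1 + y) powr a < 1 powr a" using assms by (intro powr_less_mono2) auto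
  then show ?thesis using less by (simp add: secant_slope_def divide_neg_neg)
next
  case greater
  then have "1 powr a < (1 + y) powr a" using assms by (intro powr_less_mono2) auto
  then show ?thesis using greater by (simp add: secant_slope_def)
qed (use assms in \<open>simp add: secant_slope_def\<close>)

lemma slope_defect_0: "slope_defect a 0 = 0"
  by (simp add: slope_defect_def secant_slope_def)

lemma secant_slope_has_derivative:
  assumes "y > -1" "y \<noteq> 0"
  shows "(secant_slope a has_real_derivative slope_defect a y / y) (at y)"
proof -
  have "((\<lambda>y. ((1 + y) powr a - 1) / y) has_real_derivative
      ((a * (1 + y) powr (a - 1)) * y - ((1 + y) powr a - 1)) / (y * y)) (at y)"
    using assms by (auto intro!: derivative_eq_intros)
  moreover have "((a * (1 + y) powr (a - 1)) * y - ((1 + y) powr a - 1)) / (y * y) = slope_defect a y / y"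
    using assms by (simp add: slope_defect_def secant_slope_def field_simps)
  ultimately have "((\<lambda>y. ((1 + y) powr a - 1) / y) has_real_derivative slope_defect a y / y) (at y)"
    by simp
  then show ?thesis
    by (rule has_field_derivative_transform_within_open[where S = "- {0}"])
       (use assms in \<open>auto simp: secant_slope_def\<close>)
qed

lemma slope_defect_eq_tangent_defect:
  assumes "y > -1" "y \<noteq> 0"
  shows "slope_defect a y = - tangent_defect a (1 + y) / y"
proof -
  define P where "P = (1 + y) powr (a - 1)"
  have "(1 + y) powr a = P * (1 + y)"
    using powr_add[of "1 + y" "a - 1" 1] assms by (simp add: P_def)
  then show ?thesis using assms
    unfolding slope_defect_def secant_slope_def tangent_defect_def P_def[symmetric]
    by (simp add: field_simps)
qed

lemma slope_defect_pos:
  assumes "a * (1 - a) < 0" "y > 0"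
  shows "slope_defect a y > 0"
  using tangent_defect_neg[OF assms(1), of "1 + y"] assms(2)
  by (simp add: slope_defect_eq_tangent_defect divide_neg_pos)

lemma slope_defect_neg:
  assumes "a * (1 - a) > 0" "y > 0"
  shows "slope_defect a y < 0"
  using tangent_defect_pos[OF assms(1), of "1 + y"] assms(2)
  by (simp add: slope_defect_eq_tangent_defect)

lemma Kfun_minus_one:
  assumes "z + t \<noteq> 0"
  shows "Kfun t z - 1 = (1 - z^2) / (z + t)^2"
  using assms by (simp add: Kfun_def field_simps) (simp add: power2_eq_square algebra_simps)

lemma Kfun_gt_one:
  assumes "\<bar>z\<bar> < 1" "z + t \<noteq> 0"
  shows "Kfun t z > 1"
proof -
  have "1 - z^2 > 0" using assms by (simp add: abs_square_less_1)
  moreover have "(z + t)^2 > 0" using assms(2) by simp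
  ultimately have "Kfun t z - 1 > 0" unfolding Kfun_minus_one[OF assms(2)] by simp
  then show ?thesis by simp
qed

lemma Kfun_has_derivative:
  assumes "z + t \<noteq> 0"
  shows "((\<lambda>s. Kfun s z) has_real_derivative -2 * (Kfun t z - 1) / (z + t)) (at t)"
proof -
  have numerator: "(2*t + 2*z) * (z + t)^2 - (t^2 + 2*t*z + 1) * (2 * (z + t))
      = -2 * (1 - z^2) * (z + t)"
    by (simp add: power2_eq_square algebra_simps)
  have cancel: "c * d * S / (S^2)^2 = c * (d / S^2) / S" if "S \<noteq> 0" for c d S :: real
    using that by (simp add: field_simps power2_eq_square)
  have "((\<lambda>s. (s^2 + 2 * s * z + 1) / (z + s)^2) has_real_derivative
      ((2*t + 2*z) * (z + t)^2 - (t^2 + 2*t*z + 1) * (2 * (z + t))) / ((z + t)^2)^2) (at t)"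
    using assms by (auto intro!: derivative_eq_intros)
  then have "((\<lambda>s. Kfun s z) has_real_derivative -2 * ((1 - z^2) / (z + t)^2) / (z + t)) (at t)"
    unfolding numerator cancel[OF assms] by (simp only: Kfun_def)
  then show ?thesis
    unfolding Kfun_minus_one[OF assms] .
qed

lemma Jtilde_sym_has_derivative:
  assumes "z + t \<noteq> 0" "Kfun t z > 0"
  shows "((\<lambda>s. Jtilde_sym q s z) has_real_derivative
           2 * (z + t) * tangent_defect (2/q) (Kfun t z)) (at t)"
proof -
  define a K where "a = 2/q" and "K = Kfun t z"
  have powr_a: "K powr a = K powr (a - 1) * K"
    using powr_add[of K "a - 1" 1] assms by (simp add: K_def)
  have "((\<lambda>s. Jtilde_sym q s z) has_real_derivative
      2 * (z + t) * (K powr a - 1) + (z + t)^2 * (a * K powr (a - 1) * (-2 * (K - 1) / (z + t)))) (at t)"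
    unfolding Jtilde_sym_def
    by (rule derivative_eq_intros Kfun_has_derivative[OF assms(1)] refl | use assms in \<open>simp add: a_def K_def\<close>)+
  moreover have "2 * (z + t) * (K powr a - 1) + (z + t)^2 * (a * K powr (a - 1) * (-2 * (K - 1) / (z + t)))
      = 2 * (z + t) * tangent_defect a K"
    unfolding tangent_defect_def powr_a using assms(1)
    by (simp add: power2_eq_square field_simps)
  ultimately show ?thesis by (simp add: a_def K_def)
qed

lemma Jtilde_sym_eq_secant_slope:
  assumes "z + t \<noteq> 0"
  shows "Jtilde_sym q t z = (1 - z^2) * secant_slope (2/q) (Kfun t z - 1)"
proof (cases "Kfun t z = 1")
  case True
  then have "1 - z^2 = 0" using Kfun_minus_one[OF assms] assms by simp
  then show ?thesis using True by (simp add: Jtilde_sym_def)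
next
  case False
  have "1 - z^2 = (z + t)^2 * (Kfun t z - 1)"
    using Kfun_minus_one[OF assms] assms by simp
  then show ?thesis using False by (simp add: Jtilde_sym_def secant_slope_def)
qed

lemma secant_slope_Kfun_has_derivative:
  assumes "z + t \<noteq> 0" "Kfun t z > 0"
  shows "((\<lambda>s. secant_slope a (Kfun s z - 1)) has_real_derivative
           -2 * slope_defect a (Kfun t z - 1) / (z + t)) (at t)"
proof (cases "Kfun t z = 1")
  case True
  then have "1 - z^2 = 0"
    using Kfun_minus_one[OF assms(1)] assms(1) by simp
  then have "a = secant_slope a (Kfun s z - 1)" if "s \<in> - {-z}" for s
    using that by (simp add: Kfun_minus_one secant_slope_def add_eq_0_iff)
  then have "((\<lambda>s. secant_slope a (Kfun s z - 1)) has_real_derivative 0) (at t)"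
    using assms(1)
    by (intro has_field_derivative_transform_within_open[OF DERIV_const, where S = "- {-z}"])
       (auto simp: add_eq_0_iff)
  then show ?thesis using True by (simp add: slope_defect_0)
next
  case False
  define y where "y = Kfun t z - 1"
  have y: "y > -1" "y \<noteq> 0" using False assms(2) by (auto simp: y_def)
  have dK: "((\<lambda>s. Kfun s z - 1) has_real_derivative -2 * y / (z + t)) (at t)"
    using DERIV_diff[OF Kfun_has_derivative[OF assms(1)] DERIV_const[of 1]] by (simp add: y_def)
  have dS: "(secant_slope a has_real_derivative slope_defect a y / y) (at (Kfun t z - 1))"
    using secant_slope_has_derivative[OF y] unfolding y_def .
  have eq: "slope_defect a y / y * (-2 * y / (z + t)) = -2 * slope_defect a y / (z + t)"
    using y by simp
  from DERIV_chain2[OF dS dK, unfolded eq] show ?thesis unfolding y_def .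
qed

section \<open>The angular form of Theta\<close>

text \<open>The integrand of \<open>Theta (-q) q r\<close> after the substitutions
  \<open>x = ((z + t) / (t - 1)) powr (1/q)\<close> and \<open>z = sin \<theta>\<close>.\<close>

definition angular_integrand :: "real \<Rightarrow> real \<Rightarrow> real \<Rightarrow> real" where
  "angular_integrand q t \<theta> = 1 / (q * sqrt (secant_slope (2/q) (Kfun t (sin \<theta>) - 1)))"

definition angular_integrand_dt :: "real \<Rightarrow> real \<Rightarrow> real \<Rightarrow> real" where
  "angular_integrand_dt q t \<theta> = slope_defect (2/q) (Kfun t (sin \<theta>) - 1) /
     (q * (sin \<theta> + t) * secant_slope (2/q) (Kfun t (sin \<theta>) - 1)
        * sqrt (secant_slope (2/q) (Kfun t (sin \<theta>) - 1)))"

definition Theta_angular :: "real \<Rightarrow> real \<Rightarrow> real" where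
  "Theta_angular q t = integral {-(pi/2)..pi/2} (angular_integrand q t)"

lemma sin_add_pos: "(t::real) > 1 \<Longrightarrow> sin (\<theta>::real) + t > 0"
  using sin_ge_minus_one[of \<theta>] by linarith

lemma Kfun_sin_minus_one:
  assumes "sin \<theta> + t \<noteq> 0"
  shows "Kfun t (sin \<theta>) - 1 = (cos \<theta>)^2 / (sin \<theta> + t)^2"
  using Kfun_minus_one[OF assms] by (simp add: cos_squared_eq)

lemma Kfun_sin_ge_one:
  assumes "t > 1"
  shows "Kfun t (sin \<theta>) \<ge> 1"
proof -
  have "Kfun t (sin \<theta>) - 1 = (cos \<theta>)^2 / (sin \<theta> + t)^2"
    using sin_add_pos[OF assms, of \<theta>] by (intro Kfun_sin_minus_one) simp
  moreover have "(cos \<theta>)^2 / (sin \<theta> + t)^2 \<ge> 0" by simp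
  ultimately show ?thesis by linarith
qed

lemma secant_slope_Kfun_sin_pos:
  assumes "a > 0" "t > 1"
  shows "secant_slope a (Kfun t (sin \<theta>) - 1) > 0"
  using secant_slope_pos[OF assms(1)] Kfun_sin_ge_one[OF assms(2), of \<theta>] by simp

lemma angular_integrand_has_derivative:
  assumes "q > 0" "t > 1"
  shows "((\<lambda>s. angular_integrand q s \<theta>) has_real_derivative angular_integrand_dt q t \<theta>) (at t)"
proof -
  define G where "G = secant_slope (2/q) (Kfun t (sin \<theta>) - 1)"
  define M where "M = slope_defect (2/q) (Kfun t (sin \<theta>) - 1)"
  define S where "S = sin \<theta> + t"
  have S: "S > 0" using sin_add_pos[OF assms(2)] by (simp add: S_def)
  have K: "Kfun t (sin \<theta>) > 0" using Kfun_sin_ge_one[OF assms(2), of \<theta>] by simp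
  have G: "G > 0" using secant_slope_Kfun_sin_pos assms by (simp add: G_def)
  have dG: "((\<lambda>s. secant_slope (2/q) (Kfun s (sin \<theta>) - 1)) has_real_derivative
      -2 * M / S) (at t)"
    unfolding M_def S_def by (rule secant_slope_Kfun_has_derivative) (use S K in \<open>auto simp: S_def\<close>)
  have "((\<lambda>s. angular_integrand q s \<theta>) has_real_derivative
      - (q * (inverse (sqrt G) / 2 * (-2 * M / S))) / (q * sqrt G)^2) (at t)"
    unfolding angular_integrand_def
    by (rule derivative_eq_intros dG refl | use G assms(1) in \<open>simp add: G_def; fail\<close>)+
       (simp add: G_def power2_eq_square)
  moreover have "- (q * (inverse (sqrt G) / 2 * (-2 * M / S))) / (q * sqrt G)^2
      = angular_integrand_dt q t \<theta>"
    unfolding angular_integrand_dt_def G_def[symmetric] M_def[symmetric] S_def[symmetric]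
    using G S assms(1) by (simp add: field_simps power2_eq_square)
  ultimately show ?thesis by simp
qed

lemma continuous_on_compose_Kfun_sin:
  assumes "continuous_on {-1<..} f"
  shows "continuous_on ({1<..} \<times> UNIV) (\<lambda>(t, \<theta>). f (Kfun t (sin \<theta>) - 1))"
proof -
  have "sin \<theta> + t \<noteq> 0" if "t > 1" for t \<theta> :: real
    using sin_add_pos[OF that, of \<theta>] by linarith
  then have "continuous_on ({1<..} \<times> UNIV) (\<lambda>(t, \<theta>). Kfun t (sin \<theta>) - 1)"
    unfolding Kfun_def case_prod_unfold by (intro continuous_intros) auto
  moreover have "(\<lambda>(t, \<theta>). Kfun t (sin \<theta>) - 1) ` ({1<..} \<times> UNIV) \<subseteq> {-1<..}"
  proof (clarsimp)
    fix t \<theta> :: real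
    assume "t > 1"
    from Kfun_sin_ge_one[OF this, of \<theta>] show "Kfun t (sin \<theta>) > 0" by simp
  qed
  ultimately show ?thesis
    using continuous_on_compose2[OF assms] by (simp add: case_prod_unfold)
qed

lemma continuous_on_angular_integrand:
  assumes "q > 0"
  shows "continuous_on ({1<..} \<times> UNIV) (\<lambda>(t, \<theta>). angular_integrand q t \<theta>)"
proof -
  have "continuous_on ({1<..} \<times> UNIV) (\<lambda>(t, \<theta>). secant_slope (2/q) (Kfun t (sin \<theta>) - 1))"
    by (rule continuous_on_compose_Kfun_sin[OF continuous_on_secant_slope])
  then show ?thesis
    unfolding angular_integrand_def case_prod_unfold
    using assms secant_slope_Kfun_sin_pos[of "2/q"]
    by (intro continuous_intros) (auto simp: less_imp_neq[symmetric])
qed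

lemma continuous_on_angular_integrand_dt:
  assumes "q > 0"
  shows "continuous_on ({1<..} \<times> UNIV) (\<lambda>(t, \<theta>). angular_integrand_dt q t \<theta>)"
proof -
  have "continuous_on ({1<..} \<times> UNIV) (\<lambda>(t, \<theta>). secant_slope (2/q) (Kfun t (sin \<theta>) - 1))"
    by (rule continuous_on_compose_Kfun_sin[OF continuous_on_secant_slope])
  moreover have "continuous_on ({1<..} \<times> UNIV) (\<lambda>(t, \<theta>). slope_defect (2/q) (Kfun t (sin \<theta>) - 1))"
    by (rule continuous_on_compose_Kfun_sin[OF continuous_on_slope_defect])
  ultimately show ?thesis
    unfolding angular_integrand_dt_def case_prod_unfold
    using assms secant_slope_Kfun_sin_pos[of "2/q"] sin_add_pos
    by (intro continuous_intros) (auto simp: less_imp_neq[symmetric])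
qed

lemma Theta_angular_has_derivative:
  assumes "q > 0" "t > 1"
  shows "(Theta_angular q has_real_derivative integral {-(pi/2)..pi/2} (angular_integrand_dt q t)) (at t)"
proof -
  have "((\<lambda>t. integral (cbox (-(pi/2)) (pi/2)) (angular_integrand q t)) has_real_derivative
      integral (cbox (-(pi/2)) (pi/2)) (angular_integrand_dt q t)) (at t within {1<..})"
  proof (rule leibniz_rule_field_derivative)
    show "((\<lambda>s. angular_integrand q s \<theta>) has_real_derivative angular_integrand_dt q s \<theta>)
        (at s within {1<..})" if "s \<in> {1<..}" for s \<theta>
      using angular_integrand_has_derivative[OF assms(1)] that
      by (simp add: has_field_derivative_at_within)
    show "angular_integrand q s integrable_on cbox (-(pi/2)) (pi/2)" if "s \<in> {1<..}" for s
      using continuous_on_o_Pair[OF continuous_on_angular_integrand[OF assms(1)] that]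
      by (intro integrable_continuous) (auto simp: o_def intro: continuous_on_subset)
    show "continuous_on ({1<..} \<times> cbox (-(pi/2)) (pi/2)) (\<lambda>(s, \<theta>). angular_integrand_dt q s \<theta>)"
      by (rule continuous_on_subset[OF continuous_on_angular_integrand_dt[OF assms(1)]]) auto
  qed (use assms(2) in auto)
  moreover have "at t within {1<..} = at t"
    using assms(2) by (intro at_within_open) auto
  moreover have "Theta_angular q = (\<lambda>t. integral (cbox (-(pi/2)) (pi/2)) (angular_integrand q t))"
    by (simp add: Theta_angular_def fun_eq_iff)
  ultimately show ?thesis by simp
qed

lemma angular_integrand_dt_sign:
  assumes "q > 0" "t > 1" "cos \<theta> > 0"
  shows "(q < 2 \<longrightarrow> angular_integrand_dt q t \<theta> > 0) \<and> (q > 2 \<longrightarrow> angular_integrand_dt q t \<theta> < 0)"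
proof -
  define y where "y = Kfun t (sin \<theta>) - 1"
  have S: "sin \<theta> + t > 0" using sin_add_pos[OF assms(2)] .
  have y: "y > 0"
    using Kfun_sin_minus_one[of \<theta> t] S assms(3) by (simp add: y_def)
  have G: "secant_slope (2/q) y > 0"
    using secant_slope_Kfun_sin_pos assms(1,2) by (simp add: y_def)
  have denominator: "q * (sin \<theta> + t) * secant_slope (2/q) y * sqrt (secant_slope (2/q) y) > 0"
    using assms(1) S G by simp
  show ?thesis
  proof (intro conjI impI)
    assume "q < 2"
    then have "2/q * (1 - 2/q) < 0"
      using assms(1) by (intro mult_pos_neg) (auto simp: field_simps)
    from slope_defect_pos[OF this y] show "angular_integrand_dt q t \<theta> > 0"
      using denominator by (simp add: angular_integrand_dt_def y_def)
  next
    assume "q > 2"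
    then have "2/q * (1 - 2/q) > 0"
      using assms(1) by (auto simp: field_simps)
    from slope_defect_neg[OF this y] show "angular_integrand_dt q t \<theta> < 0"
      using denominator by (simp add: angular_integrand_dt_def y_def divide_neg_pos)
  qed
qed

lemma Theta_angular_deriv_sign:
  assumes "q > 0" "t > 1"
  shows "(q < 2 \<longrightarrow> integral {-(pi/2)..pi/2} (angular_integrand_dt q t) > 0)
       \<and> (q > 2 \<longrightarrow> integral {-(pi/2)..pi/2} (angular_integrand_dt q t) < 0)"
proof -
  have cont: "continuous_on {-(pi/2)..pi/2} (angular_integrand_dt q t)"
    using continuous_on_o_Pair[OF continuous_on_angular_integrand_dt[OF assms(1)], of t] assms(2)
    by (auto simp: o_def intro: continuous_on_subset)
  have nonempty: "{-(pi/2)<..<pi/2} \<noteq> {}"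
    using pi_gt_zero by (auto simp: not_le intro!: exI[of _ 0])
  have sign: "(q < 2 \<longrightarrow> angular_integrand_dt q t \<theta> > 0) \<and> (q > 2 \<longrightarrow> angular_integrand_dt q t \<theta> < 0)"
    if "\<theta> \<in> {-(pi/2)<..<pi/2}" for \<theta>
    using that by (intro angular_integrand_dt_sign assms cos_gt_zero_pi) auto
  show ?thesis
    using integral_less_real[OF continuous_on_const cont nonempty, of 0]
      integral_less_real[OF cont continuous_on_const nonempty, of 0] sign
    by auto
qed

lemma Jtilde_sym_sin_integrand:
  assumes "q > 0" "t > 1" "cos \<theta> > 0"
  shows "Jtilde_sym q t (sin \<theta>) powr (-1/2) / q * cos \<theta> = angular_integrand q t \<theta>"
proof -
  define G where "G = secant_slope (2/q) (Kfun t (sin \<theta>) - 1)"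
  have G: "G > 0" using secant_slope_Kfun_sin_pos assms(1,2) by (simp add: G_def)
  have J: "Jtilde_sym q t (sin \<theta>) = (cos \<theta>)^2 * G"
    using Jtilde_sym_eq_secant_slope[of "sin \<theta>" t q] sin_add_pos[OF assms(2), of \<theta>]
    by (simp add: G_def cos_squared_eq)
  have "Jtilde_sym q t (sin \<theta>) powr (-1/2) = 1 / sqrt ((cos \<theta>)^2 * G)"
    unfolding J using G assms(3) by (intro powr_minus_half) simp
  also have "\<dots> = 1 / (cos \<theta> * sqrt G)"
    using assms(3) by (simp add: real_sqrt_mult)
  finally show ?thesis
    using assms(3) by (simp add: angular_integrand_def G_def)
qed

lemma Jtilde_sym_has_integral_Theta_angular:
  assumes "q > 0" "t > 1"
  shows "((\<lambda>z. Jtilde_sym q t z powr (-1/2) / q) has_integral Theta_angular q t) {-1..1}"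
proof -
  have angular: "(angular_integrand q t has_integral Theta_angular q t) {-(pi/2)..pi/2}"
    using continuous_on_o_Pair[OF continuous_on_angular_integrand[OF assms(1)], of t] assms(2)
    unfolding Theta_angular_def
    by (intro integrable_integral integrable_continuous_interval)
       (auto simp: o_def intro: continuous_on_subset)
  have substituted: "((\<lambda>\<theta>. Jtilde_sym q t (sin \<theta>) powr (-1/2) / q * cos \<theta>) has_integral Theta_angular q t)
      {-(pi/2)..pi/2}"
  proof (rule has_integral_spike_finite[OF _ _ angular])
    show "Jtilde_sym q t (sin \<theta>) powr (-1/2) / q * cos \<theta> = angular_integrand q t \<theta>"
      if "\<theta> \<in> {-(pi/2)..pi/2} - {-(pi/2), pi/2}" for \<theta>
      using that assms by (intro Jtilde_sym_sin_integrand cos_gt_zero_pi) auto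
  qed simp
  have "((\<lambda>z. Jtilde_sym q t z powr (-1/2) / q) has_integral Theta_angular q t)
      {sin (-(pi/2))..sin (pi/2)}"
  proof (rule has_integral_substitution_nonneg[where g = sin and g' = cos, OF _ _ _ _ _ _ substituted])
    show "(\<lambda>z. Jtilde_sym q t z powr (-1/2) / q) \<in> borel_measurable borel"
      unfolding Jtilde_sym_def Kfun_def by measurable
    show "Jtilde_sym q t z powr (-1/2) / q \<ge> 0" for z
      using assms(1) by simp
    show "(sin has_real_derivative cos \<theta>) (at \<theta>)" for \<theta>
      by (rule DERIV_sin)
    show "cos \<theta> \<ge> 0" if "\<theta> \<in> {-(pi/2)..pi/2}" for \<theta>
      using that by (intro cos_ge_zero) auto
  qed (simp_all add: continuous_on_cos)
  then show ?thesis by simp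
qed

lemma Theta_sym_integrand_substitution:
  fixes q t z :: real
  assumes "q > 0" "t > 1" "\<bar>z\<bar> < 1"
  defines "R \<equiv> (t + 1) / (t - 1)" and "x \<equiv> ((z + t) / (t - 1)) powr (1/q)"
  shows "((1 + R - R * x powr (-q)) powr (2/q) - x^2) powr (-1/2) * (x / (q * (z + t)))
       = Jtilde_sym q t z powr (-1/2) / q"
proof -
  define u where "u = (z + t) / (t - 1)"
  define W where "W = Kfun t z powr (2/q) - 1"
  have S: "z + t > 0" using assms(2,3) by linarith
  have u: "u > 0" using S assms(2) by (simp add: u_def)
  have x: "x > 0" using u by (simp add: x_def u_def[symmetric])
  have K: "Kfun t z > 1" using Kfun_gt_one[OF assms(3)] S by simp
  have W: "W > 0" using K assms(1) by (simp add: W_def)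
  have x_powr: "x powr (-q) = 1 / u"
    using u assms(1) by (simp add: x_def u_def[symmetric] powr_powr powr_minus_divide)
  have x_sq: "x^2 = u powr (2/q)"
    using u by (simp add: x_def u_def[symmetric] powr_powr flip: powr_numeral)
  have "1 + R - R / u = u * Kfun t z"
  proof -
    define D where "D = t - 1"
    define S where "S = z + t"
    have t: "t = D + 1" and z: "z = S - D - 1" and "D > 0" "S > 0"
      using S assms(2) by (auto simp: D_def S_def)
    then show ?thesis
      unfolding R_def u_def Kfun_def t z
      by (simp add: field_simps power2_eq_square)
  qed
  then have "(1 + R - R * x powr (-q)) powr (2/q) - x^2 = x^2 * W"
    using u K by (simp add: x_powr x_sq W_def powr_mult algebra_simps)
  then have "((1 + R - R * x powr (-q)) powr (2/q) - x^2) powr (-1/2) = 1 / (x * sqrt W)"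
    using x W by (simp add: powr_minus_half real_sqrt_mult del: divide_minus_left)
  moreover have "Jtilde_sym q t z powr (-1/2) = 1 / ((z + t) * sqrt W)"
    using S W
    by (simp add: Jtilde_sym_def W_def[symmetric] powr_minus_half real_sqrt_mult del: divide_minus_left)
  ultimately show ?thesis
    using x S assms(1) by (simp add: field_simps)
qed

lemma Theta_sym_eq_Theta_angular:
  assumes "q > 0" "r > 1"
  shows "Theta (-q) q r = Theta_angular q ((r powr q + 1) / (r powr q - 1))"
proof -
  define t where "t = (r powr q + 1) / (r powr q - 1)"
  define R where "R = (t + 1) / (t - 1)"
  define f where "f = (\<lambda>x::real. ((1 + R - R * x powr (-q)) powr (2/q) - x^2) powr (-1/2))"
  define X where "X = (\<lambda>z. ((z + t) / (t - 1)) powr (1/q))"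
  define X' where "X' = (\<lambda>z. X z / (q * (z + t)))"
  have rq: "r powr q > 1" using assms by simp
  have t: "t > 1" using rq by (simp add: t_def field_simps)
  have R: "R = r powr q" using rq by (simp add: R_def t_def field_simps)
  have "Theta (-q) q r = integral {1..r} f"
  proof -
    have inverse: "r powr (-q) = 1 / R" by (simp add: R powr_minus_divide)
    have "R > 1" using rq by (simp add: R)
    then have "(r powr (-q) - r powr q) / (r powr (-q) - 1) = 1 + R"
      "(r powr q - 1) / (r powr (-q) - 1) = - R"
      unfolding inverse R[symmetric] by (simp_all add: field_simps)
    then show ?thesis by (simp add: Theta_def f_def)
  qed
  moreover have "(f has_integral Theta_angular q t) {X (-1)..X 1}"
  proof (rule has_integral_substitution_nonneg[where g = X and g' = X' and a = "-1" and b = 1])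
    show "f \<in> borel_measurable borel" unfolding f_def by measurable
    show "(X has_real_derivative X' z) (at z)" if "z \<in> {-1..1}" for z
    proof -
      define u where "u = (z + t) / (t - 1)"
      have u: "u > 0" using that t by (simp add: u_def)
      have "((\<lambda>z. (z + t) / (t - 1)) has_real_derivative 1 / (t - 1)) (at z)"
        using t by (auto intro!: derivative_eq_intros)
      from DERIV_fun_powr[OF this, of "1/q"] have
        "(X has_real_derivative 1/q * u powr (1/q - 1) * (1 / (t - 1))) (at z)"
        using u by (simp add: X_def u_def)
      moreover have "1/q * u powr (1/q - 1) * (1 / (t - 1)) = X' z"
      proof -
        have Xz: "X z = u powr (1/q)" and S: "z + t = u * (t - 1)"
          using t by (simp_all add: X_def u_def)
        show ?thesis
          using u t unfolding X'_def Xz S by (simp add: powr_diff field_simps)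
      qed
      ultimately show ?thesis by simp
    qed
    show "continuous_on {-1..1} X'"
      unfolding X'_def X_def using t assms(1)
      by (intro continuous_intros) auto
    show "X' z \<ge> 0" if "z \<in> {-1..1}" for z
      using that t assms(1) by (simp add: X'_def X_def)
    have "((\<lambda>z. f (X z) * X' z) has_integral Theta_angular q t) {-1..1}"
    proof (rule has_integral_spike_finite[OF _ _ Jtilde_sym_has_integral_Theta_angular[OF assms(1) t]])
      show "f (X z) * X' z = Jtilde_sym q t z powr (-1/2) / q" if "z \<in> {-1..1} - {-1, 1}" for z
        using that Theta_sym_integrand_substitution[OF assms(1) t, of z]
        by (simp add: f_def X'_def X_def R_def abs_less_iff)
    qed simp
    then show "((\<lambda>z. f (X z) * X' z) has_integral Theta_angular q t) {-1..1}" .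
  qed (auto simp: f_def)
  moreover have "X (-1) = 1" using t by (simp add: X_def)
  moreover have "X 1 = r"
  proof -
    have "X 1 = R powr (1/q)" by (simp add: X_def R_def add.commute)
    then show ?thesis using assms by (simp add: R powr_powr)
  qed
  ultimately show ?thesis
    by (simp add: integral_unique t_def)
qed

lemma Theta_sym_has_derivative:
  assumes "q > 0" "r > 1"
  defines "t \<equiv> (r powr q + 1) / (r powr q - 1)"
  shows "((\<lambda>s. Theta (-q) q s) has_real_derivative
           integral {-(pi/2)..pi/2} (angular_integrand_dt q t) * (-2 * q * r powr (q - 1) / (r powr q - 1)^2))
         (at r)"
proof -
  define T where "T = (\<lambda>s::real. (s powr q + 1) / (s powr q - 1))"
  have rq: "r powr q > 1" using assms by simp
  have t: "T r = t" "t > 1" using rq by (simp_all add: T_def t_def field_simps)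
  have "(T has_real_derivative -2 * q * r powr (q - 1) / (r powr q - 1)^2) (at r)"
    unfolding T_def using assms(2) rq by (intro powr_ratio_has_derivative) auto
  from DERIV_chain2[OF Theta_angular_has_derivative[OF assms(1) t(2), folded t(1)] this]
  show ?thesis
    unfolding t(1)
    by (rule has_field_derivative_transform_within_open[where S = "{1<..}"])
       (use assms Theta_sym_eq_Theta_angular in \<open>auto simp: T_def\<close>)
qed

theorem theorem6p1:
  fixes q :: real
  assumes "q > 0"
  shows "(\<forall>t z. t > 1 \<longrightarrow> -1 < z \<longrightarrow> z < 1 \<longrightarrow>
            (\<exists>D. ((\<lambda>s. Jtilde_sym q s z) has_real_derivative D) (at t) \<and>
                 (q < 2 \<longrightarrow> D < 0) \<and> (q > 2 \<longrightarrow> D > 0)))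
       \<and> (\<forall>r. r > 1 \<longrightarrow>
            (\<exists>D. ((\<lambda>s. Theta (-q) q s) has_real_derivative D) (at r) \<and>
                 (q < 2 \<longrightarrow> D < 0) \<and> (q > 2 \<longrightarrow> D > 0)))"
proof (intro conjI allI impI)
  have convex: "2/q * (1 - 2/q) < 0" if "q < 2"
    using assms that by (intro mult_pos_neg) (auto simp: field_simps)
  have concave: "2/q * (1 - 2/q) > 0" if "q > 2"
    using assms that by (auto simp: field_simps)
  fix t z :: real
  assume "t > 1" "-1 < z" "z < 1"
  then have S: "z + t > 0" and K: "Kfun t z > 1"
    using Kfun_gt_one[of z t] by auto
  show "\<exists>D. ((\<lambda>s. Jtilde_sym q s z) has_real_derivative D) (at t) \<and> (q < 2 \<longrightarrow> D < 0) \<and> (q > 2 \<longrightarrow> D > 0)"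
    using Jtilde_sym_has_derivative[of z t q] S K
      tangent_defect_neg[OF convex K] tangent_defect_pos[OF concave K]
    by (intro exI[of _ "2 * (z + t) * tangent_defect (2/q) (Kfun t z)"]) (auto simp: mult_pos_neg)
next
  fix r :: real
  assume r: "r > 1"
  define t where "t = (r powr q + 1) / (r powr q - 1)"
  define dTheta where "dTheta = integral {-(pi/2)..pi/2} (angular_integrand_dt q t)"
  define dt where "dt = -2 * q * r powr (q - 1) / (r powr q - 1)^2"
  have "((\<lambda>s. Theta (-q) q s) has_real_derivative dTheta * dt) (at r)"
    unfolding dTheta_def dt_def t_def by (rule Theta_sym_has_derivative[OF assms r])
  moreover have "dt < 0" using assms r by (simp add: dt_def)
  moreover have "t > 1" using r assms by (simp add: t_def field_simps)
  ultimately show "\<exists>D. ((\<lambda>s. Theta (-q) q s) has_real_derivative D) (at r) \<and> (q < 2 \<longrightarrow> D < 0) \<and> (q > 2 \<longrightarrow> D > 0)"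
    using Theta_angular_deriv_sign[OF assms, of t]
    by (intro exI[of _ "dTheta * dt"]) (auto simp: dTheta_def mult_pos_neg mult_neg_neg)
qed

end
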